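(* Let $n\ge 2$ be an integer and let $x_1,\dots,x_n>0$ satisfy $\frac1n\sum_{i=1}^n\frac1{x_i}=1$. Then \[ \frac1n\sum_{i=1}^n x_i\le\prod_{i=1}^n x_i, \] with equality if and only if $x_1=\cdots=x_n=1$ when $n\ge3$; when $n=2$, equality holds for all such $x_1,x_2$. *)

theory Defs
  imports Complex_Main
begin

end

theory Submission
  imports Defs
begin

(* With y i = 1 / x i the y i have mean 1, and
   (\<Sum> x) / (\<Prod> x) = (\<Prod> y) * (\<Sum> 1 / y) = e_{n-1}(y), the elementary symmetric
   function of degree n - 1.  The claim is the Maclaurin-type bound
   e_{n-1}(y) \<le> n * (mean y)^(n-1), proved by induction on the index set: adding a point t
   to a set F of size m with mean a gives e_m(F + t) = t * e_{m-1}(F) + e_m(F), which the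
   induction hypothesis and AM-GM bound by m t a^(m-1) + a^m, and Bernoulli's inequality
   bounds this by (m + 1) times the m-th power of the new mean, strictly if m \<ge> 2 and t \<noteq> a.
   So for n \<ge> 3 equality forces every point to equal the mean, while for n = 2
   e_1(y) = y 1 + y 2 = 2 always. *)

lemma Bernoulli_inequality_strict:
  fixes x :: "'a :: linordered_field"
  assumes "-1 \<le> x" and "x \<noteq> 0" and "2 \<le> n"
  shows "1 + of_nat n * x < (1 + x) ^ n"
proof -
  obtain m where n: "n = Suc m"
    using assms(3) by (cases n) auto
  with assms(3) have "1 \<le> m" by simp
  with assms(2) have "0 < of_nat m * x\<^sup>2"
    by simp
  then have "1 + of_nat n * x < (1 + x) * (1 + of_nat m * x)"
    by (simp add: n algebra_simps power2_eq_square)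
  also have "\<dots> \<le> (1 + x) * (1 + x) ^ m"
    using assms(1) by (intro mult_left_mono Bernoulli_inequality) auto
  finally show ?thesis by (simp add: n)
qed

lemma amgm_repeated:
  fixes a t :: real
  assumes "0 < a" and "0 \<le> t"
  shows "a ^ m * t \<le> ((real m * a + t) / (real m + 1)) ^ (m + 1)"
proof -
  define x where "x = (t / a - 1) / (real m + 1)"
  have "0 \<le> t / a"
    using assms by simp
  then have "-1 \<le> x"
    unfolding x_def by (subst pos_le_divide_eq) auto
  have "1 + real (m + 1) * x = t / a"
    using assms by (simp add: x_def divide_simps) (simp add: algebra_simps)
  then have lhs: "a ^ m * t = a ^ (m + 1) * (1 + real (m + 1) * x)"
    using assms by simp
  have "a * (1 + x) = (real m * a + t) / (real m + 1)"
    using assms by (simp add: x_def divide_simps) (simp add: algebra_simps)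
  then have rhs: "a ^ (m + 1) * (1 + x) ^ (m + 1) = ((real m * a + t) / (real m + 1)) ^ (m + 1)"
    by (simp only: power_mult_distrib[symmetric])
  show ?thesis
    unfolding lhs rhs[symmetric] using assms \<open>-1 \<le> x\<close>
    by (intro mult_left_mono Bernoulli_inequality) auto
qed

lemma maclaurin_repeated:
  fixes a t :: real
  assumes "0 < a" and "0 \<le> t" and "1 \<le> m"
  shows "real m * t * a ^ (m - 1) + a ^ m \<le> (real m + 1) * ((real m * a + t) / (real m + 1)) ^ m"
    and "2 \<le> m \<Longrightarrow> t \<noteq> a \<Longrightarrow>
      real m * t * a ^ (m - 1) + a ^ m < (real m + 1) * ((real m * a + t) / (real m + 1)) ^ m"
proof -
  define x where "x = (t / a - 1) / (real m + 1)"
  have "0 \<le> t / a"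
    using assms by simp
  then have "-1 \<le> x"
    unfolding x_def by (subst pos_le_divide_eq) auto
  have factor: "(real m + 1) * (1 + real m * x) = 1 + real m * t / a"
    using assms by (simp add: x_def divide_simps) (simp add: algebra_simps)
  have "a ^ m = a * a ^ (m - 1)"
    using assms(3) by (cases m) auto
  then have "real m * t * a ^ (m - 1) + a ^ m = a ^ m * (1 + real m * t / a)"
    using assms by (simp add: field_simps)
  also have "\<dots> = a ^ m * ((real m + 1) * (1 + real m * x))"
    by (simp only: factor)
  also have "\<dots> = (real m + 1) * a ^ m * (1 + real m * x)"
    by (simp only: mult_ac)
  finally have lhs: "real m * t * a ^ (m - 1) + a ^ m = (real m + 1) * a ^ m * (1 + real m * x)" .
  have "a * (1 + x) = (real m * a + t) / (real m + 1)"
    using assms by (simp add: x_def divide_simps) (simp add: algebra_simps)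
  then have rhs: "(real m + 1) * a ^ m * (1 + x) ^ m = (real m + 1) * ((real m * a + t) / (real m + 1)) ^ m"
    by (simp only: mult.assoc power_mult_distrib[symmetric])
  show "real m * t * a ^ (m - 1) + a ^ m \<le> (real m + 1) * ((real m * a + t) / (real m + 1)) ^ m"
    unfolding lhs rhs[symmetric] using assms \<open>-1 \<le> x\<close>
    by (intro mult_left_mono Bernoulli_inequality) auto
  assume "2 \<le> m" and "t \<noteq> a"
  then have "x \<noteq> 0" using assms by (simp add: x_def)
  then show "real m * t * a ^ (m - 1) + a ^ m < (real m + 1) * ((real m * a + t) / (real m + 1)) ^ m"
    unfolding lhs rhs[symmetric] using assms \<open>-1 \<le> x\<close> \<open>2 \<le> m\<close>
    by (intro mult_strict_left_mono Bernoulli_inequality_strict) auto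
qed

lemma prod_le_mean_power:
  fixes y :: "'a \<Rightarrow> real"
  assumes "finite A" and "\<And>i. i \<in> A \<Longrightarrow> 0 < y i"
  shows "prod y A \<le> (sum y A / card A) ^ card A"
  using assms
proof (induction A rule: finite_induct)
  case empty
  then show ?case by simp
next
  case (insert t F)
  show ?case
  proof (cases "F = {}")
    case True
    then show ?thesis by simp
  next
    case False
    define m where "m = card F"
    define a where "a = sum y F / m"
    have "1 \<le> m"
      using insert.hyps False by (simp add: m_def Suc_le_eq card_gt_0_iff)
    have "0 < sum y F"
      using insert False by (intro sum_pos) auto
    with \<open>1 \<le> m\<close> have "0 < a"
      by (simp add: a_def)
    have "prod y (insert t F) = prod y F * y t"
      using insert.hyps by simp
    also have "\<dots> \<le> a ^ m * y t"
      using insert by (intro mult_right_mono) (auto simp: m_def a_def less_imp_le)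
    also have "\<dots> \<le> ((real m * a + y t) / (real m + 1)) ^ (m + 1)"
      using \<open>0 < a\<close> insert.prems by (intro amgm_repeated) (auto simp: less_imp_le)
    also have "\<dots> = (sum y (insert t F) / card (insert t F)) ^ card (insert t F)"
      using insert.hyps \<open>1 \<le> m\<close> by (simp add: m_def a_def add.commute)
    finally show ?thesis .
  qed
qed

lemma prod_mult_sum_inverse_insert_le:
  fixes y :: "'a \<Rightarrow> real"
  assumes "finite F" and "F \<noteq> {}" and "t \<notin> F" and pos: "\<And>i. i \<in> insert t F \<Longrightarrow> 0 < y i"
    and hyp: "prod y F * (\<Sum>i\<in>F. 1 / y i) \<le> card F * (sum y F / card F) ^ (card F - 1)"
  shows "prod y (insert t F) * (\<Sum>i\<in>insert t F. 1 / y i)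
      \<le> card (insert t F) * (sum y (insert t F) / card (insert t F)) ^ (card (insert t F) - 1)"
    and "2 \<le> card F \<Longrightarrow> prod y (insert t F) * (\<Sum>i\<in>insert t F. 1 / y i)
      = card (insert t F) * (sum y (insert t F) / card (insert t F)) ^ (card (insert t F) - 1) \<Longrightarrow>
      y t = sum y (insert t F) / card (insert t F)"
proof -
  define m where "m = card F"
  define a where "a = sum y F / m"
  have "1 \<le> m"
    using assms(1,2) by (simp add: m_def Suc_le_eq card_gt_0_iff)
  have "0 < sum y F"
    using assms(1,2) pos by (intro sum_pos) auto
  with \<open>1 \<le> m\<close> have "0 < a"
    by (simp add: a_def)
  have "0 < y t"
    using pos by simp
  have lhs: "prod y (insert t F) * (\<Sum>i\<in>insert t F. 1 / y i)
      = y t * (prod y F * (\<Sum>i\<in>F. 1 / y i)) + prod y F"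
    using assms(1,3) \<open>0 < y t\<close> by (simp add: field_simps)
  have rhs: "card (insert t F) * (sum y (insert t F) / card (insert t F)) ^ (card (insert t F) - 1)
      = (real m + 1) * ((real m * a + y t) / (real m + 1)) ^ m"
    using assms(1,3) \<open>1 \<le> m\<close> by (simp add: m_def a_def add.commute)
  have "prod y F \<le> a ^ m"
    using prod_le_mean_power[of F y] assms(1) pos by (simp add: m_def a_def)
  then have mid: "y t * (prod y F * (\<Sum>i\<in>F. 1 / y i)) + prod y F
      \<le> real m * y t * a ^ (m - 1) + a ^ m"
    using hyp \<open>0 < y t\<close> by (simp add: m_def a_def mult_left_mono add_mono)
  have step: "real m * y t * a ^ (m - 1) + a ^ m \<le> (real m + 1) * ((real m * a + y t) / (real m + 1)) ^ m"
    using \<open>0 < a\<close> \<open>0 < y t\<close> \<open>1 \<le> m\<close> by (intro maclaurin_repeated) auto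
  show "prod y (insert t F) * (\<Sum>i\<in>insert t F. 1 / y i)
      \<le> card (insert t F) * (sum y (insert t F) / card (insert t F)) ^ (card (insert t F) - 1)"
    unfolding lhs rhs using mid step by linarith
  assume "2 \<le> card F" and "prod y (insert t F) * (\<Sum>i\<in>insert t F. 1 / y i)
      = card (insert t F) * (sum y (insert t F) / card (insert t F)) ^ (card (insert t F) - 1)"
  then have "\<not> real m * y t * a ^ (m - 1) + a ^ m < (real m + 1) * ((real m * a + y t) / (real m + 1)) ^ m"
    using mid unfolding lhs rhs by linarith
  moreover have "2 \<le> m"
    using \<open>2 \<le> card F\<close> by (simp add: m_def)
  ultimately have "y t = a"
    using maclaurin_repeated(2)[OF \<open>0 < a\<close> _ \<open>1 \<le> m\<close>, of "y t"] \<open>0 < y t\<close> by fastforce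
  moreover have "sum y F = real m * a"
    using \<open>1 \<le> m\<close> by (simp add: a_def)
  ultimately have "sum y (insert t F) = (real m + 1) * a"
    using assms(1,3) by (simp add: algebra_simps)
  then show "y t = sum y (insert t F) / card (insert t F)"
    using assms(1,3) \<open>y t = a\<close> by (simp add: m_def add.commute)
qed

lemma prod_mult_sum_inverse_le:
  fixes y :: "'a \<Rightarrow> real"
  assumes "finite A" and "\<And>i. i \<in> A \<Longrightarrow> 0 < y i"
  shows "prod y A * (\<Sum>i\<in>A. 1 / y i) \<le> card A * (sum y A / card A) ^ (card A - 1)"
  using assms
proof (induction A rule: finite_induct)
  case empty
  then show ?case by simp
next
  case (insert t F)
  show ?case
  proof (cases "F = {}")
    case True
    with insert.prems show ?thesis by simp
  next
    case False
    with insert show ?thesis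
      by (intro prod_mult_sum_inverse_insert_le(1)) auto
  qed
qed

lemma prod_mult_sum_inverse_eq_imp_eq_mean:
  fixes y :: "'a \<Rightarrow> real"
  assumes "finite A" and "\<And>i. i \<in> A \<Longrightarrow> 0 < y i" and "3 \<le> card A"
    and "prod y A * (\<Sum>i\<in>A. 1 / y i) = card A * (sum y A / card A) ^ (card A - 1)"
  shows "\<forall>i\<in>A. y i = sum y A / card A"
proof
  fix t assume "t \<in> A"
  define F where "F = A - {t}"
  have A: "A = insert t F" and "t \<notin> F" and "finite F"
    using \<open>t \<in> A\<close> assms(1) by (auto simp: F_def)
  have "2 \<le> card F"
    using assms(1,3) \<open>t \<in> A\<close> by (simp add: F_def)
  then have "F \<noteq> {}"
    by auto
  have "prod y F * (\<Sum>i\<in>F. 1 / y i) \<le> card F * (sum y F / card F) ^ (card F - 1)"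
    using \<open>finite F\<close> assms(2) by (intro prod_mult_sum_inverse_le) (auto simp: A)
  then show "y t = sum y A / card A"
    using prod_mult_sum_inverse_insert_le(2)[OF \<open>finite F\<close> \<open>F \<noteq> {}\<close> \<open>t \<notin> F\<close>]
      assms(2,4) \<open>2 \<le> card F\<close> unfolding A by blast
qed

lemma prod_mult_sum_inverse_card_2:
  fixes y :: "'a \<Rightarrow> real"
  assumes "card A = 2" and "\<And>i. i \<in> A \<Longrightarrow> y i \<noteq> 0"
  shows "prod y A * (\<Sum>i\<in>A. 1 / y i) = sum y A"
proof -
  obtain i j where "i \<noteq> j" and "A = {i, j}"
    using assms(1) by (auto simp: card_2_iff)
  then show ?thesis
    using assms(2) by (simp add: field_simps)
qed

theorem lemma4p4:
  fixes n :: nat and x :: "nat \<Rightarrow> real"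
  assumes "n \<ge> 2"
    and "\<And>i. i \<in> {1..n} \<Longrightarrow> x i > 0"
    and "(1 / real n) * (\<Sum>i=1..n. 1 / x i) = 1"
  shows "(1 / real n) * (\<Sum>i=1..n. x i) \<le> (\<Prod>i=1..n. x i)
    \<and> (n \<ge> 3 \<longrightarrow>
          ((1 / real n) * (\<Sum>i=1..n. x i) = (\<Prod>i=1..n. x i) \<longleftrightarrow> (\<forall>i\<in>{1..n}. x i = 1)))
    \<and> (n = 2 \<longrightarrow> (1 / real n) * (\<Sum>i=1..n. x i) = (\<Prod>i=1..n. x i))"
proof -
  define y where "y i = 1 / x i" for i
  have y_pos: "\<And>i. i \<in> {1..n} \<Longrightarrow> 0 < y i"
    using assms(2) by (simp add: y_def)
  have "0 < real n" and "0 < (\<Prod>i=1..n. x i)"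
    using assms(1,2) by (auto intro: prod_pos)
  have sum_y: "sum y {1..n} = n"
    using assms(3) \<open>0 < real n\<close> by (simp add: y_def field_simps)
  then have mean_y: "sum y {1..n} / card {1..n} = 1"
    using \<open>0 < real n\<close> by simp
  have dual: "prod y {1..n} * (\<Sum>i=1..n. 1 / y i) = (\<Sum>i=1..n. x i) / (\<Prod>i=1..n. x i)"
    by (simp add: y_def prod_dividef)
  have rescale: "(1 / real n) * S \<le> P \<longleftrightarrow> S / P \<le> n" "(1 / real n) * S = P \<longleftrightarrow> S / P = n"
    if "0 < P" for S P :: real
    using that \<open>0 < real n\<close> by (auto simp: field_simps)
  note rescale = rescale[OF \<open>0 < (\<Prod>i=1..n. x i)\<close>]
  show ?thesis
  proof (intro conjI impI)
    show "(1 / real n) * (\<Sum>i=1..n. x i) \<le> (\<Prod>i=1..n. x i)"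
      using prod_mult_sum_inverse_le[of "{1..n}" y] y_pos unfolding rescale(1) dual mean_y by simp
  next
    assume "3 \<le> n"
    show "(1 / real n) * (\<Sum>i=1..n. x i) = (\<Prod>i=1..n. x i) \<longleftrightarrow> (\<forall>i\<in>{1..n}. x i = 1)"
    proof
      assume "(1 / real n) * (\<Sum>i=1..n. x i) = (\<Prod>i=1..n. x i)"
      then have "\<forall>i\<in>{1..n}. y i = 1"
        using prod_mult_sum_inverse_eq_imp_eq_mean[of "{1..n}" y] y_pos \<open>3 \<le> n\<close>
        unfolding rescale(2) dual mean_y by simp
      then show "\<forall>i\<in>{1..n}. x i = 1"
        by (simp add: y_def)
    qed (use \<open>0 < real n\<close> in simp)
  next
    assume "n = 2"
    then have "prod y {1..n} * (\<Sum>i=1..n. 1 / y i) = sum y {1..n}"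
      using y_pos by (intro prod_mult_sum_inverse_card_2) force+
    then show "(1 / real n) * (\<Sum>i=1..n. x i) = (\<Prod>i=1..n. x i)"
      unfolding rescale(2) dual sum_y .
  qed
qed

end
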